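(* Fix $q\in[0,1)$. Let $R_n$ be the number of records of $\Pi_n$, where $(\Pi_n)_{n\in\mathbb{N}}$ are coupled through the infinite Bernoulli model. Then $$\frac{R_n-n(1-q)}{\sqrt n\,\log n}\longrightarrow0\quad\text{almost surely};$$ in particular $R_n/n\to1-q$ almost surely.
   Context: Infinite Bernoulli model: $(B_{i,j})_{i,j\ge1}$ independent Bernoulli$(1-q)$, $I_i=\min\{j\notin\{I_1,\dots,I_{i-1}\}:B_{i,j}=1\}$; $\Pi_n$ is the permutation of $\{1,\dots,n\}$ with $\Pi_n(i)=|\{j\le n:I_j\le I_i\}|$. The number of records of $\Pi_n$ is $R_n=|\{j\le n:\Pi_n(j)>\Pi_n(i)\ \forall i<j\}|=|\{j\le n:I_j>I_i\ \forall i<j\}|$. *)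

theory Defs
  imports "HOL-Probability.Probability"
begin

text \<open>A sample point is an array
  \<open>\<omega> :: nat \<times> nat \<Rightarrow> bool\<close>; \<open>\<omega> (i,j)\<close> is \<open>B_{i,j} = 1\<close>. Only indices i,j \<ge> 1 are used.\<close>

definition bern_model :: "real \<Rightarrow> (nat \<times> nat \<Rightarrow> bool) measure" where
  "bern_model q = PiM UNIV (\<lambda>_. measure_pmf (bernoulli_pmf (1 - q)))"

text \<open>\<open>Iseq \<omega> n = [I_1, ..., I_n]\<close>.\<close>
fun Iseq :: "(nat \<times> nat \<Rightarrow> bool) \<Rightarrow> nat \<Rightarrow> nat list" where
  "Iseq \<omega> 0 = []"
| "Iseq \<omega> (Suc n) = Iseq \<omega> n @ [LEAST j. 1 \<le> j \<and> j \<notin> set (Iseq \<omega> n) \<and> \<omega> (Suc n, j)]"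

text \<open>\<open>I_i\<close> for i \<ge> 1.\<close>
definition Ival :: "(nat \<times> nat \<Rightarrow> bool) \<Rightarrow> nat \<Rightarrow> nat" where
  "Ival \<omega> i = last (Iseq \<omega> i)"

definition Perm_n :: "(nat \<times> nat \<Rightarrow> bool) \<Rightarrow> nat \<Rightarrow> nat \<Rightarrow> nat" where
  "Perm_n \<omega> n i = card {j \<in> {1..n}. Ival \<omega> j \<le> Ival \<omega> i}"

definition records :: "(nat \<times> nat \<Rightarrow> bool) \<Rightarrow> nat \<Rightarrow> nat" where
  "records \<omega> n = card {j \<in> {1..n}. \<forall>i \<in> {1..<j}. Perm_n \<omega> n j > Perm_n \<omega> n i}"

end

(* Read the array column by column instead of row by row. Column m is the value of a record
   exactly when, at the first step i at which the greedy choices leave {1, ..., m - 1}, the entry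
   B(i + 1, m) is 1; that step is determined by the columns before m, so the record values form a
   Bernoulli(1 - q) process and their number S_N up to N is Binomial(N, 1 - q). Hoeffding's
   inequality and Borel-Cantelli give S_N = N (1 - q) + o(sqrt N log N) almost surely.
   The records of Pi_n are the record values up to the largest column M_n chosen by the first
   n rows, and M_n - n = O(log n) almost surely: a choice overshooting its index by L needs L
   zeros in the first L free columns of a fresh row, which has probability q^L. Hence
   R_n = S_(M_n) = n (1 - q) + o(sqrt n log n). *)

theory Submission
  imports Defs "HOL-Real_Asymp.Real_Asymp"
begin

type_synonym sample = "nat \<times> nat \<Rightarrow> bool"

section \<open>The Bernoulli product measure\<close>

lemma space_bern_model [simp]: "space (bern_model q) = UNIV"
  by (simp add: bern_model_def space_PiM)

lemma sets_bern_model: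
  "sets (bern_model q) = sets (PiM UNIV (\<lambda>_::nat \<times> nat. count_space (UNIV :: bool set)))"
  unfolding bern_model_def by (rule sets_PiM_cong) auto

lemma prob_space_bern_model: "prob_space (bern_model q)"
  unfolding bern_model_def by (intro prob_space_PiM prob_space_measure_pmf)

lemma measurable_bern_model_coord [measurable]:
  "(\<lambda>\<omega>. \<omega> x) \<in> measurable (bern_model q) (count_space UNIV)"
  using measurable_component_singleton[of x UNIV "\<lambda>_::nat \<times> nat. count_space (UNIV :: bool set)"]
  by (simp add: measurable_cong_sets[OF sets_bern_model refl])

lemma pred_in_sets_bern_model:
  "Measurable.pred (bern_model q) P \<Longrightarrow> {\<omega>. P \<omega>} \<in> sets (bern_model q)"
  using pred_def[where M = "bern_model q" and P = P] by simp

lemma measure_bern_model_const_on: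
  assumes q: "0 \<le> q" "q \<le> 1" and F: "finite F"
  shows "measure (bern_model q) {\<omega>. \<forall>x\<in>F. \<omega> x = b} = (if b then 1 - q else q) ^ card F"
proof -
  let ?coin = "measure_pmf (bernoulli_pmf (1 - q))"
  interpret product_prob_space "\<lambda>_::nat \<times> nat. ?coin" UNIV
    by unfold_locales (simp add: prob_space_measure_pmf)
  have "{\<omega>. \<forall>x\<in>F. \<omega> x = b} = {\<omega>\<in>space (PiM UNIV (\<lambda>_. ?coin)). \<forall>x\<in>F. \<omega> x \<in> {b}}"
    by (auto simp: space_PiM)
  moreover have "emeasure (PiM UNIV (\<lambda>_. ?coin)) {\<omega>\<in>space (PiM UNIV (\<lambda>_. ?coin)). \<forall>x\<in>F. \<omega> x \<in> {b}}
      = (\<Prod>x\<in>F. emeasure ?coin {b})"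
    using F by (intro emeasure_PiM_Collect) auto
  ultimately have "emeasure (bern_model q) {\<omega>. \<forall>x\<in>F. \<omega> x = b} = (\<Prod>x\<in>F. emeasure ?coin {b})"
    unfolding bern_model_def by simp
  also have "\<dots> = ennreal ((if b then 1 - q else q) ^ card F)"
    using q by (simp add: emeasure_pmf_single prod_ennreal ennreal_power)
  finally show ?thesis
    using q by (simp add: measure_def)
qed

corollary measure_bern_model_coord:
  "0 \<le> q \<Longrightarrow> q \<le> 1 \<Longrightarrow> measure (bern_model q) {\<omega>. \<omega> x = b} = (if b then 1 - q else q)"
  using measure_bern_model_const_on[of q "{x}" b] by simp

lemma indep_vars_bern_model_coords:
  "prob_space.indep_vars (bern_model q) (\<lambda>_. measure_pmf (bernoulli_pmf (1 - q))) (\<lambda>x \<omega>. \<omega> x) UNIV"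
proof -
  let ?M = "bern_model q"
  let ?N = "\<lambda>_::nat \<times> nat. measure_pmf (bernoulli_pmf (1 - q))"
  interpret M: prob_space ?M
    by (rule prob_space_bern_model)
  interpret N: product_prob_space ?N UNIV
    by unfold_locales (simp add: prob_space_measure_pmf)
  have coord: "(\<lambda>\<omega>. \<omega> x) \<in> measurable ?M (?N x)" for x
    using measurable_bern_model_coord[of x q]
    by (subst measurable_cong_sets[OF refl, where N' = "count_space UNIV"]) auto
  show ?thesis
  proof (subst M.indep_vars_iff_distr_eq_PiM)
    have "distr ?M (PiM UNIV ?N) (\<lambda>\<omega>. \<lambda>x\<in>UNIV. \<omega> x) = ?M"
      by (simp add: bern_model_def restrict_UNIV distr_id)
    also have "\<dots> = PiM UNIV (\<lambda>x. distr ?M (?N x) (\<lambda>\<omega>. \<omega> x))"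
      unfolding bern_model_def by (simp add: N.PiM_component)
    finally show "distr ?M (PiM UNIV ?N) (\<lambda>\<omega>. \<lambda>x\<in>UNIV. \<omega> x) = \<dots>" .
  qed (use coord in auto)
qed

definition depends_only_on :: "('i \<Rightarrow> 'b) set \<Rightarrow> 'i set \<Rightarrow> bool" where
  "depends_only_on A J \<longleftrightarrow> (\<forall>\<omega> \<omega>'. (\<forall>x\<in>J. \<omega> x = \<omega>' x) \<longrightarrow> \<omega> \<in> A \<longrightarrow> \<omega>' \<in> A)"

lemma depends_only_onI:
  "(\<And>\<omega> \<omega>'. (\<And>x. x \<in> J \<Longrightarrow> \<omega> x = \<omega>' x) \<Longrightarrow> \<omega> \<in> A \<Longrightarrow> \<omega>' \<in> A) \<Longrightarrow> depends_only_on A J"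
  unfolding depends_only_on_def by blast

text \<open>The witness is the preimage of \<open>C\<close> under extension by \<open>False\<close> outside \<open>I\<close>.\<close>

lemma depends_only_on_vimage_restrict:
  assumes C: "C \<in> sets (bern_model q)" "depends_only_on C I"
  obtains X where "X \<in> sets (PiM I (\<lambda>_. measure_pmf (bernoulli_pmf (1 - q))))"
    and "(\<lambda>\<omega>. restrict \<omega> I) -` X \<inter> space (bern_model q) = C"
proof
  let ?N = "\<lambda>_::nat \<times> nat. measure_pmf (bernoulli_pmf (1 - q))"
  define ext where "ext f = (\<lambda>x. if x \<in> I then f x else False)" for f :: "nat \<times> nat \<Rightarrow> bool"
  have "ext \<in> measurable (PiM I ?N) (bern_model q)"
    unfolding bern_model_def ext_def
  proof (rule measurable_PiM_single')
    show "(\<lambda>f. if x \<in> I then f x else False) \<in> measurable (PiM I ?N) (?N x)" for x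
    proof (cases "x \<in> I")
      case True
      then show ?thesis
        by (simp only: if_True) (rule measurable_component_singleton)
    qed simp
  qed simp
  then show "ext -` C \<inter> space (PiM I ?N) \<in> sets (PiM I ?N)"
    using C(1) by (rule measurable_sets)
  have "\<omega> \<in> C \<longleftrightarrow> ext (restrict \<omega> I) \<in> C" for \<omega>
  proof -
    have "\<forall>x\<in>I. \<omega> x = ext (restrict \<omega> I) x" "\<forall>x\<in>I. ext (restrict \<omega> I) x = \<omega> x"
      by (simp_all add: ext_def)
    with C(2) show ?thesis
      unfolding depends_only_on_def by blast
  qed
  then show "(\<lambda>\<omega>. restrict \<omega> I) -` (ext -` C \<inter> space (PiM I ?N)) \<inter> space (bern_model q) = C"
    by (auto simp: space_PiM)
qed

lemma bern_model_indep_disjoint_coords: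
  assumes A: "A \<in> sets (bern_model q)" "depends_only_on A J"
    and B: "B \<in> sets (bern_model q)" "depends_only_on B K"
    and "J \<inter> K = {}"
  shows "measure (bern_model q) (A \<inter> B) = measure (bern_model q) A * measure (bern_model q) B"
proof -
  interpret prob_space "bern_model q"
    by (rule prob_space_bern_model)
  obtain XA XB where X: "XA \<in> sets (PiM J (\<lambda>_. measure_pmf (bernoulli_pmf (1 - q))))"
      "XB \<in> sets (PiM K (\<lambda>_. measure_pmf (bernoulli_pmf (1 - q))))"
    and A_eq: "(\<lambda>\<omega>. restrict \<omega> J) -` XA \<inter> space (bern_model q) = A"
    and B_eq: "(\<lambda>\<omega>. restrict \<omega> K) -` XB \<inter> space (bern_model q) = B"
    using depends_only_on_vimage_restrict[OF A] depends_only_on_vimage_restrict[OF B] by metis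
  have indep: "indep_var (PiM J (\<lambda>_. measure_pmf (bernoulli_pmf (1 - q)))) (\<lambda>\<omega>. restrict \<omega> J)
      (PiM K (\<lambda>_. measure_pmf (bernoulli_pmf (1 - q)))) (\<lambda>\<omega>. restrict \<omega> K)"
    by (rule indep_var_restrict[OF indep_vars_bern_model_coords \<open>J \<inter> K = {}\<close>]) auto
  have "(\<lambda>\<omega>. (restrict \<omega> J, restrict \<omega> K)) -` (XA \<times> XB) \<inter> space (bern_model q) = A \<inter> B"
    unfolding A_eq[symmetric] B_eq[symmetric] by auto
  with indep_varD[OF indep X] show ?thesis
    unfolding A_eq B_eq by simp
qed

section \<open>Greedy choices and records\<close>

text \<open>A total version of the choice rule of \<^const>\<open>Iseq\<close>: \<open>first_free \<omega> k U\<close> is \<open>0\<close> when row \<open>k\<close>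
  has no admissible 1, so \<open>choice \<omega> t\<close> (which is \<open>I\<^sub>t\<^sub>+\<^sub>1\<close>) is defined on every sample point.\<close>

definition first_free :: "sample \<Rightarrow> nat \<Rightarrow> nat set \<Rightarrow> nat" where
  "first_free \<omega> k U =
     (if \<exists>j. 1 \<le> j \<and> j \<notin> U \<and> \<omega> (k, j) then LEAST j. 1 \<le> j \<and> j \<notin> U \<and> \<omega> (k, j) else 0)"

fun choices :: "sample \<Rightarrow> nat \<Rightarrow> nat list" where
  "choices \<omega> 0 = []"
| "choices \<omega> (Suc t) = choices \<omega> t @ [first_free \<omega> (Suc t) (set (choices \<omega> t))]"

definition choice :: "sample \<Rightarrow> nat \<Rightarrow> nat" where
  "choice \<omega> t = first_free \<omega> (Suc t) (set (choices \<omega> t))"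

lemma choices_eq_map: "choices \<omega> k = map (choice \<omega>) [0..<k]"
  by (induction k) (simp_all add: choice_def)

lemma set_choices: "set (choices \<omega> k) = choice \<omega> ` {..<k}"
  by (auto simp: choices_eq_map)

lemma choice_eq_first_free: "choice \<omega> t = first_free \<omega> (Suc t) (choice \<omega> ` {..<t})"
  by (simp only: choice_def set_choices)

lemma first_free_admissible:
  assumes "0 < first_free \<omega> k U"
  shows "1 \<le> first_free \<omega> k U \<and> first_free \<omega> k U \<notin> U \<and> \<omega> (k, first_free \<omega> k U)"
proof -
  have ex: "\<exists>j. 1 \<le> j \<and> j \<notin> U \<and> \<omega> (k, j)"
    using assms by (auto simp: first_free_def split: if_splits)
  then show ?thesis
    unfolding first_free_def if_P[OF ex] by (rule LeastI_ex)
qed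

lemma first_free_le:
  assumes "1 \<le> j" "j \<notin> U" "\<omega> (k, j)"
  shows "0 < first_free \<omega> k U \<and> first_free \<omega> k U \<le> j"
proof -
  have ex: "\<exists>j. 1 \<le> j \<and> j \<notin> U \<and> \<omega> (k, j)"
    using assms by blast
  have "1 \<le> (LEAST j. 1 \<le> j \<and> j \<notin> U \<and> \<omega> (k, j))"
    using LeastI_ex[OF ex] by blast
  moreover have "(LEAST j. 1 \<le> j \<and> j \<notin> U \<and> \<omega> (k, j)) \<le> j"
    using assms by (intro Least_le) blast
  ultimately show ?thesis
    unfolding first_free_def if_P[OF ex] by linarith
qed

lemma choice_admissible:
  "0 < choice \<omega> t \<Longrightarrow> 1 \<le> choice \<omega> t \<and> choice \<omega> t \<notin> choice \<omega> ` {..<t} \<and> \<omega> (Suc t, choice \<omega> t)"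
  unfolding choice_eq_first_free[of \<omega> t] by (rule first_free_admissible)

lemma choice_le:
  "1 \<le> j \<Longrightarrow> j \<notin> choice \<omega> ` {..<t} \<Longrightarrow> \<omega> (Suc t, j) \<Longrightarrow> 0 < choice \<omega> t \<and> choice \<omega> t \<le> j"
  unfolding choice_eq_first_free[of \<omega> t] by (rule first_free_le)

lemma choice_inj:
  assumes "0 < choice \<omega> t" "0 < choice \<omega> t'" "choice \<omega> t = choice \<omega> t'"
  shows "t = t'"
proof (rule ccontr)
  assume "t \<noteq> t'"
  then have "choice \<omega> t \<in> choice \<omega> ` {..<t'} \<or> choice \<omega> t' \<in> choice \<omega> ` {..<t}"
    using assms(3) by (metis imageI lessThan_iff linorder_neqE_nat)
  then show False
    using choice_admissible[OF assms(1)] choice_admissible[OF assms(2)] assms(3) by simp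

qed

definition rows_unbounded :: "sample \<Rightarrow> bool" where
  "rows_unbounded \<omega> \<longleftrightarrow> (\<forall>k N. \<exists>j\<ge>N. \<omega> (k, j))"

lemma rows_unbounded_admissible:
  assumes "rows_unbounded \<omega>" "finite U"
  shows "\<exists>j. 1 \<le> j \<and> j \<notin> U \<and> \<omega> (k, j)"
proof -
  obtain j where j: "Suc (Max (insert 0 U)) \<le> j" "\<omega> (k, j)"
    using assms(1) unfolding rows_unbounded_def by blast
  then have "j \<notin> U"
    using Max_ge[of "insert 0 U"] assms(2) by (metis Suc_n_not_le_n finite_insert insertCI le_trans)
  with j show ?thesis by (intro exI[of _ j]) auto
qed

lemma rows_unbounded_choice_pos: "rows_unbounded \<omega> \<Longrightarrow> 0 < choice \<omega> t"
  using rows_unbounded_admissible[of \<omega> "choice \<omega> ` {..<t}" "Suc t"] choice_le by blast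

lemma rows_unbounded_inj_choice: "rows_unbounded \<omega> \<Longrightarrow> inj_on (choice \<omega>) A"
  by (rule inj_onI) (use choice_inj rows_unbounded_choice_pos in blast)

lemma Iseq_eq_choices: "rows_unbounded \<omega> \<Longrightarrow> Iseq \<omega> k = choices \<omega> k"
proof (induction k)
  case (Suc k)
  have "\<exists>j. 1 \<le> j \<and> j \<notin> set (choices \<omega> k) \<and> \<omega> (Suc k, j)"
    using rows_unbounded_admissible[OF Suc.prems] by simp
  then show ?case
    using Suc by (simp add: first_free_def)
qed simp

lemma Ival_Suc_eq_choice: "rows_unbounded \<omega> \<Longrightarrow> Ival \<omega> (Suc t) = choice \<omega> t"
  by (simp add: Ival_def Iseq_eq_choices choice_def del: Iseq.simps)

definition seq_records :: "sample \<Rightarrow> nat \<Rightarrow> nat" where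
  "seq_records \<omega> n = card {t\<in>{..<n}. \<forall>t'<t. choice \<omega> t' < choice \<omega> t}"

lemma Perm_n_less_iff:
  assumes "i \<in> {1..n}" "j \<in> {1..n}"
  shows "Perm_n \<omega> n i < Perm_n \<omega> n j \<longleftrightarrow> Ival \<omega> i < Ival \<omega> j"
proof -
  define A where "A i = {k\<in>{1..n}. Ival \<omega> k \<le> Ival \<omega> i}" for i
  have fin: "finite (A i)" for i
    by (simp add: A_def)
  show ?thesis
  proof
    assume "Ival \<omega> i < Ival \<omega> j"
    then have "A i \<subseteq> A j" "j \<in> A j - A i"
      using assms(2) by (auto simp: A_def)
    then have "A i \<subset> A j"
      by blast
    then show "Perm_n \<omega> n i < Perm_n \<omega> n j"
      unfolding Perm_n_def A_def[symmetric] by (intro psubset_card_mono fin)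
  next
    assume less: "Perm_n \<omega> n i < Perm_n \<omega> n j"
    show "Ival \<omega> i < Ival \<omega> j"
    proof (rule ccontr)
      assume "\<not> Ival \<omega> i < Ival \<omega> j"
      then have "card (A j) \<le> card (A i)"
        by (intro card_mono fin) (auto simp: A_def)
      with less show False
        unfolding Perm_n_def A_def[symmetric] by simp
    qed
  qed
qed

lemma records_eq_seq_records:
  assumes "rows_unbounded \<omega>"
  shows "records \<omega> n = seq_records \<omega> n"
proof -
  have Ival: "Ival \<omega> (Suc t) = choice \<omega> t" for t
    using Ival_Suc_eq_choice[OF assms] .
  have "{j\<in>{1..n}. \<forall>i\<in>{1..<j}. Perm_n \<omega> n i < Perm_n \<omega> n j}
      = Suc ` {t\<in>{..<n}. \<forall>t'<t. choice \<omega> t' < choice \<omega> t}"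
  proof (intro set_eqI iffI)
    fix j assume j: "j \<in> {j\<in>{1..n}. \<forall>i\<in>{1..<j}. Perm_n \<omega> n i < Perm_n \<omega> n j}"
    then obtain t where t: "j = Suc t"
      using not0_implies_Suc by force
    have "choice \<omega> t' < choice \<omega> t" if "t' < t" for t'
      using j that Perm_n_less_iff[of "Suc t'" n j \<omega>] by (auto simp: t Ival)
    with j t show "j \<in> Suc ` {t\<in>{..<n}. \<forall>t'<t. choice \<omega> t' < choice \<omega> t}"
      by auto
  next
    fix j assume "j \<in> Suc ` {t\<in>{..<n}. \<forall>t'<t. choice \<omega> t' < choice \<omega> t}"
    then obtain t where t: "j = Suc t" "t < n" "\<And>t'. t' < t \<Longrightarrow> choice \<omega> t' < choice \<omega> t"
      by auto
    have "Perm_n \<omega> n i < Perm_n \<omega> n j" if "i \<in> {1..<j}" for i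
      using that t Perm_n_less_iff[of i n j \<omega>] Ival[of "i - 1"] by (auto simp: Ival)
    with t show "j \<in> {j\<in>{1..n}. \<forall>i\<in>{1..<j}. Perm_n \<omega> n i < Perm_n \<omega> n j}"
      by auto
  qed
  then show ?thesis
    unfolding records_def seq_records_def by (simp add: card_image)
qed

section \<open>Record values\<close>

definition first_exit :: "nat \<Rightarrow> nat \<Rightarrow> sample \<Rightarrow> bool" where
  "first_exit m i \<omega> \<longleftrightarrow> (\<forall>t<i. choice \<omega> t \<in> {1..<m}) \<and> choice \<omega> i \<notin> {1..<m}"

definition record_value :: "sample \<Rightarrow> nat \<Rightarrow> bool" where
  "record_value \<omega> m \<longleftrightarrow> (\<exists>i. choice \<omega> i = m \<and> (\<forall>t<i. choice \<omega> t \<in> {1..<m}))"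

definition record_value_count :: "sample \<Rightarrow> nat \<Rightarrow> nat" where
  "record_value_count \<omega> N = card {m\<in>{1..N}. record_value \<omega> m}"

lemma first_exit_exists:
  assumes "0 < m"
  shows "\<exists>i<m. first_exit m i \<omega>"
proof -
  have "\<exists>t<m. choice \<omega> t \<notin> {1..<m}"
  proof (rule ccontr)
    assume "\<not> ?thesis"
    then have all: "\<And>t. t < m \<Longrightarrow> choice \<omega> t \<in> {1..<m}"
      by blast
    have "inj_on (choice \<omega>) {..<m}"
    proof (rule inj_onI)
      fix x y assume "x \<in> {..<m}" "y \<in> {..<m}" "choice \<omega> x = choice \<omega> y"
      then show "x = y"
        using all[of x] all[of y] by (intro choice_inj[of \<omega> x y]) auto
    qed
    moreover have "choice \<omega> ` {..<m} \<subseteq> {1..<m}"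
      using all by blast
    ultimately have "card {..<m} \<le> card {1..<m}"
      by (intro card_inj_on_le) auto
    with assms show False
      by simp
  qed
  then obtain t where t: "t < m" "choice \<omega> t \<notin> {1..<m}"
    by blast
  define i where "i = (LEAST t. choice \<omega> t \<notin> {1..<m})"
  have "i \<le> t" "choice \<omega> i \<notin> {1..<m}"
    unfolding i_def using t(2) by (fact Least_le, fact LeastI)
  moreover have "choice \<omega> t' \<in> {1..<m}" if "t' < i" for t'
    using not_less_Least[OF that[unfolded i_def]] by blast
  ultimately show ?thesis
    using t(1) unfolding first_exit_def by (intro exI[of _ i]) auto
qed

lemma first_exit_unique: "first_exit m i \<omega> \<Longrightarrow> first_exit m i' \<omega> \<Longrightarrow> i = i'"
  unfolding first_exit_def by (metis linorder_neqE_nat)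

text \<open>The key observation: column \<open>m\<close> is still free when row \<open>i + 1\<close> makes its choice, and every
  column before it is either taken or holds a 0 in that row, so \<open>m\<close> is a record value iff the
  single entry \<open>\<omega> (i + 1, m)\<close> is a 1.\<close>

lemma record_value_iff_first_exit:
  assumes m: "0 < m" and exit: "first_exit m i \<omega>"
  shows "record_value \<omega> m \<longleftrightarrow> \<omega> (Suc i, m)"
proof
  assume "record_value \<omega> m"
  then obtain i' where i': "choice \<omega> i' = m" "\<forall>t<i'. choice \<omega> t \<in> {1..<m}"
    unfolding record_value_def by blast
  then have "first_exit m i' \<omega>"
    unfolding first_exit_def by simp
  then have "i' = i"
    using first_exit_unique[OF exit] by simp
  with i' m choice_admissible[of \<omega> i] show "\<omega> (Suc i, m)"
    by simp
next
  assume "\<omega> (Suc i, m)"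
  moreover have "m \<notin> choice \<omega> ` {..<i}"
    using exit unfolding first_exit_def by force
  ultimately have "choice \<omega> i = m"
    using choice_le[of m \<omega> i] m exit unfolding first_exit_def by fastforce
  with exit show "record_value \<omega> m"
    unfolding record_value_def first_exit_def by blast
qed

lemma record_value_count_Suc:
  "record_value_count \<omega> (Suc N) = record_value_count \<omega> N + (if record_value \<omega> (Suc N) then 1 else 0)"
proof -
  have "{m\<in>{1..Suc N}. record_value \<omega> m}
      = {m\<in>{1..N}. record_value \<omega> m} \<union> (if record_value \<omega> (Suc N) then {Suc N} else {})"
    by (auto simp: le_Suc_eq)
  then show ?thesis
    unfolding record_value_count_def by (auto simp: card_insert_if)
qed

definition max_choice :: "sample \<Rightarrow> nat \<Rightarrow> nat" where
  "max_choice \<omega> n = Max (choice \<omega> ` {..<n})"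

lemma choice_le_max_choice: "j < n \<Longrightarrow> choice \<omega> j \<le> max_choice \<omega> n"
  unfolding max_choice_def by (intro Max_ge) auto

lemma max_choice_attained:
  assumes "0 < n"
  shows "\<exists>j<n. max_choice \<omega> n = choice \<omega> j"
proof -
  have "max_choice \<omega> n \<in> choice \<omega> ` {..<n}"
    unfolding max_choice_def using assms by (intro Max_in) auto
  then show ?thesis
    by auto
qed

lemma max_choice_ge:
  assumes "rows_unbounded \<omega>"
  shows "n \<le> max_choice \<omega> n"
proof -
  have "choice \<omega> ` {..<n} \<subseteq> {1..max_choice \<omega> n}"
    using choice_le_max_choice rows_unbounded_choice_pos[OF assms]
    by (auto simp: Suc_le_eq)
  then have "card {..<n} \<le> card {1..max_choice \<omega> n}"
    by (intro card_inj_on_le[OF rows_unbounded_inj_choice[OF assms]]) auto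
  then show ?thesis
    by simp
qed

lemma max_choice_excess:
  assumes "0 < n"
  shows "\<exists>j<n. max_choice \<omega> n - n \<le> choice \<omega> j - Suc j"
proof -
  obtain j where "j < n" "max_choice \<omega> n = choice \<omega> j"
    using max_choice_attained[OF assms] by blast
  then show ?thesis
    by (intro exI[of _ j]) auto
qed

lemma seq_records_eq_record_value_count:
  assumes unb: "rows_unbounded \<omega>" and n: "0 < n"
  shows "seq_records \<omega> n = record_value_count \<omega> (max_choice \<omega> n)"
proof -
  define R where "R = {t\<in>{..<n}. \<forall>t'<t. choice \<omega> t' < choice \<omega> t}"
  have pos: "0 < choice \<omega> t" for t
    using rows_unbounded_choice_pos[OF unb] .
  have image_R: "choice \<omega> ` R = {m\<in>{1..max_choice \<omega> n}. record_value \<omega> m}"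
  proof (intro set_eqI iffI)
    fix m assume "m \<in> choice \<omega> ` R"
    then obtain t where "t < n" "\<And>t'. t' < t \<Longrightarrow> choice \<omega> t' < choice \<omega> t" "m = choice \<omega> t"
      unfolding R_def by blast
    then show "m \<in> {m\<in>{1..max_choice \<omega> n}. record_value \<omega> m}"
      using pos choice_le_max_choice unfolding record_value_def by (auto simp: Suc_le_eq)
  next
    fix m assume m: "m \<in> {m\<in>{1..max_choice \<omega> n}. record_value \<omega> m}"
    then obtain i where i: "choice \<omega> i = m" "\<And>t. t < i \<Longrightarrow> choice \<omega> t \<in> {1..<m}"
      unfolding record_value_def by blast
    obtain j where j: "j < n" "max_choice \<omega> n = choice \<omega> j"
      using max_choice_attained[OF n] by blast
    have "i < n"
      using i(2)[of j] j m by (cases "j < i") auto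
    moreover have "\<forall>t'<i. choice \<omega> t' < choice \<omega> i"
      using i by force
    ultimately have "i \<in> R"
      unfolding R_def by blast
    with i(1) show "m \<in> choice \<omega> ` R"
      by blast
  qed
  have "seq_records \<omega> n = card R"
    unfolding seq_records_def R_def ..
  also have "\<dots> = card (choice \<omega> ` R)"
    by (rule card_image[OF rows_unbounded_inj_choice[OF unb], symmetric])
  also have "\<dots> = record_value_count \<omega> (max_choice \<omega> n)"
    unfolding record_value_count_def image_R ..
  finally show ?thesis .
qed

definition trunc :: "nat \<Rightarrow> nat \<Rightarrow> nat" where
  "trunc m v = (if v \<in> {1..<m} then v else 0)"

lemma trunc_first_free:
  "trunc m (first_free \<omega> k U) =
     (if \<exists>j\<in>{1..<m}. j \<notin> U \<and> \<omega> (k, j) then LEAST j. j \<in> {1..<m} \<and> j \<notin> U \<and> \<omega> (k, j) else 0)"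
proof (cases "\<exists>j\<in>{1..<m}. j \<notin> U \<and> \<omega> (k, j)")
  case True
  then obtain j where j: "j \<in> {1..<m}" "j \<notin> U" "\<omega> (k, j)"
    by blast
  then have le: "0 < first_free \<omega> k U" "first_free \<omega> k U \<le> j"
    using first_free_le[of j U \<omega> k] by auto
  have "(LEAST j. j \<in> {1..<m} \<and> j \<notin> U \<and> \<omega> (k, j)) = first_free \<omega> k U"
  proof (rule Least_equality)
    show "first_free \<omega> k U \<in> {1..<m} \<and> first_free \<omega> k U \<notin> U \<and> \<omega> (k, first_free \<omega> k U)"
      using first_free_admissible[OF le(1)] le j(1) by auto
  next
    fix y assume "y \<in> {1..<m} \<and> y \<notin> U \<and> \<omega> (k, y)"
    then show "first_free \<omega> k U \<le> y"
      using first_free_le[of y U \<omega> k] by auto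
  qed
  with True le j(1) show ?thesis
    by (simp add: trunc_def)
next
  case False
  then have "first_free \<omega> k U \<notin> {1..<m}"
    using first_free_admissible[of \<omega> k U] by (cases "first_free \<omega> k U = 0") auto
  then show ?thesis
    unfolding if_not_P[OF False] by (simp add: trunc_def)
qed

text \<open>The columns \<open>< m\<close> of \<open>\<omega>\<close> already determine which steps choose a column \<open>< m\<close>,
  and which one.\<close>

lemma trunc_choice_local:
  assumes agree: "\<And>a c. c < m \<Longrightarrow> \<omega> (a, c) = \<omega>' (a, c)"
  shows "trunc m (choice \<omega> t) = trunc m (choice \<omega>' t)"
proof (induction t rule: less_induct)
  case (less t)
  have trunc_eq: "trunc m v = j \<longleftrightarrow> v = j" if "j \<in> {1..<m}" for v j
    using that by (auto simp: trunc_def)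
  have taken: "j \<in> choice \<omega> ` {..<t} \<longleftrightarrow> j \<in> choice \<omega>' ` {..<t}" if "j \<in> {1..<m}" for j
  proof -
    have "j \<in> choice \<omega> ` {..<t} \<longleftrightarrow> (\<exists>t'<t. trunc m (choice \<omega> t') = j)"
      using trunc_eq[OF that] by auto
    also have "\<dots> \<longleftrightarrow> (\<exists>t'<t. trunc m (choice \<omega>' t') = j)"
      using less.IH by auto
    also have "\<dots> \<longleftrightarrow> j \<in> choice \<omega>' ` {..<t}"
      using trunc_eq[OF that] by auto
    finally show ?thesis .
  qed
  have admissible_eq: "(\<lambda>j. j \<in> {1..<m} \<and> j \<notin> choice \<omega> ` {..<t} \<and> \<omega> (Suc t, j))
      = (\<lambda>j. j \<in> {1..<m} \<and> j \<notin> choice \<omega>' ` {..<t} \<and> \<omega>' (Suc t, j))"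
    using taken agree by (intro ext) auto
  show ?case
    unfolding choice_eq_first_free[of \<omega> t] choice_eq_first_free[of \<omega>' t] trunc_first_free Bex_def
    by (simp only: admissible_eq)
qed

lemma choice_in_range_local:
  assumes agree: "\<And>a c. c < m \<Longrightarrow> \<omega> (a, c) = \<omega>' (a, c)" and "m' \<le> m"
  shows "choice \<omega> t \<in> {1..<m'} \<longleftrightarrow> choice \<omega>' t \<in> {1..<m'}"
  using trunc_choice_local[where m = m and \<omega> = \<omega> and \<omega>' = \<omega>' and t = t, OF agree] \<open>m' \<le> m\<close>
  by (auto simp: trunc_def split: if_splits)

lemma choice_eq_local:
  assumes agree: "\<And>a c. c < m \<Longrightarrow> \<omega> (a, c) = \<omega>' (a, c)" and "m' \<in> {1..<m}"
  shows "choice \<omega> t = m' \<longleftrightarrow> choice \<omega>' t = m'"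
  using trunc_choice_local[where m = m and \<omega> = \<omega> and \<omega>' = \<omega>' and t = t, OF agree] \<open>m' \<in> {1..<m}\<close>
  by (auto simp: trunc_def split: if_splits)

lemma first_exit_local:
  "(\<And>a c. c < m \<Longrightarrow> \<omega> (a, c) = \<omega>' (a, c)) \<Longrightarrow> first_exit m i \<omega> \<longleftrightarrow> first_exit m i \<omega>'"
  unfolding first_exit_def using choice_in_range_local[of m \<omega> \<omega>' m] by simp

lemma record_value_count_local:
  assumes agree: "\<And>a c. c \<le> N \<Longrightarrow> \<omega> (a, c) = \<omega>' (a, c)"
  shows "record_value_count \<omega> N = record_value_count \<omega>' N"
proof -
  have "record_value \<omega> m \<longleftrightarrow> record_value \<omega>' m" if "m \<in> {1..N}" for m
    using that choice_in_range_local[of "Suc N" \<omega> \<omega>' m] choice_eq_local[of "Suc N" \<omega> \<omega>' m]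
    agree unfolding record_value_def by (simp add: less_Suc_eq_le)
  then show ?thesis
    unfolding record_value_count_def by (metis (mono_tags, lifting) Collect_cong)
qed

lemma choices_local:
  "(\<And>a c. a \<le> j \<Longrightarrow> \<omega> (a, c) = \<omega>' (a, c)) \<Longrightarrow> choices \<omega> j = choices \<omega>' j"
proof (induction j)
  case (Suc j)
  then have "\<omega> (Suc j, c) = \<omega>' (Suc j, c)" for c
    by simp
  then have "first_free \<omega> (Suc j) U = first_free \<omega>' (Suc j) U" for U
    unfolding first_free_def by presburger
  with Suc show ?case
    by simp
qed simp

section \<open>Blocked rows\<close>

text \<open>\<open>free_prefix U L\<close> is the shortest initial segment of the positive columns outside \<open>U\<close> with at
  least \<open>L\<close> elements.\<close>

definition free_prefix :: "nat set \<Rightarrow> nat \<Rightarrow> nat set" where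
  "free_prefix U L = {1..<(LEAST c. L \<le> card ({1..<c} - U))} - U"

lemma finite_free_prefix [simp]: "finite (free_prefix U L)"
  by (simp add: free_prefix_def)

lemma card_Diff_atLeastLessThan_ge: "finite U \<Longrightarrow> c - 1 - card U \<le> card ({1..<c} - U)"
  using diff_card_le_card_Diff[of U "{1..<c}"] by simp

lemma card_free_prefix: "finite U \<Longrightarrow> L \<le> card (free_prefix U L)"
  unfolding free_prefix_def
  by (rule LeastI[of "\<lambda>c. L \<le> card ({1..<c} - U)" "L + card U + 1"])
    (use card_Diff_atLeastLessThan_ge[of U "L + card U + 1"] in simp)

lemma free_prefix_subset: "L \<le> card ({1..<c} - U) \<Longrightarrow> free_prefix U L \<subseteq> {1..<c} - U"
  unfolding free_prefix_def using Least_le[of "\<lambda>c. L \<le> card ({1..<c} - U)" c] by auto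

definition blocked :: "nat \<Rightarrow> nat \<Rightarrow> sample \<Rightarrow> bool" where
  "blocked j L \<omega> \<longleftrightarrow> (\<forall>y\<in>free_prefix (set (choices \<omega> j)) L. \<not> \<omega> (Suc j, y))"

lemma blocked_of_excess:
  assumes excess: "L \<le> choice \<omega> j - Suc j"
  shows "blocked j L \<omega>"
proof -
  define U where "U = set (choices \<omega> j)"
  have U: "finite U" "card U \<le> j"
    unfolding U_def choices_eq_map using card_length[of "map (choice \<omega>) [0..<j]"] by auto
  have "L \<le> choice \<omega> j - 1 - card U"
    using excess U(2) by linarith
  also have "\<dots> \<le> card ({1..<choice \<omega> j} - U)"
    by (rule card_Diff_atLeastLessThan_ge[OF U(1)])
  finally have "free_prefix U L \<subseteq> {1..<choice \<omega> j} - choice \<omega> ` {..<j}"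
    unfolding U_def set_choices by (rule free_prefix_subset)
  then have "\<not> \<omega> (Suc j, y)" if "y \<in> free_prefix U L" for y
    using that choice_le[of y \<omega> j] by fastforce
  then show ?thesis
    unfolding blocked_def U_def by blast
qed

lemma measurable_first_free [measurable]:
  "(\<lambda>\<omega>. first_free \<omega> k U) \<in> measurable (bern_model q) (count_space UNIV)"
  unfolding first_free_def by measurable

lemma measurable_choices [measurable]:
  "(\<lambda>\<omega>. choices \<omega> t) \<in> measurable (bern_model q) (count_space UNIV)"
proof (induction t)
  case (Suc t)
  have "(\<lambda>\<omega>. (\<lambda>l \<omega>. l @ [first_free \<omega> (Suc t) (set l)]) (choices \<omega> t) \<omega>)
      \<in> measurable (bern_model q) (count_space UNIV)"
    by (rule measurable_compose_countable[OF _ Suc.IH]) measurable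
  then show ?case
    by simp
qed simp

lemma measurable_choice [measurable]:
  "(\<lambda>\<omega>. choice \<omega> t) \<in> measurable (bern_model q) (count_space UNIV)"
proof -
  have "(\<lambda>\<omega>. (\<lambda>l \<omega>. first_free \<omega> (Suc t) (set l)) (choices \<omega> t) \<omega>)
      \<in> measurable (bern_model q) (count_space UNIV)"
    by (rule measurable_compose_countable[OF _ measurable_choices]) measurable
  then show ?thesis
    by (simp add: choice_def)
qed

lemma pred_first_exit [measurable]: "Measurable.pred (bern_model q) (first_exit m i)"
  unfolding first_exit_def by measurable

lemma pred_record_value [measurable]: "Measurable.pred (bern_model q) (\<lambda>\<omega>. record_value \<omega> m)"
  unfolding record_value_def by measurable

lemma measurable_record_value_count [measurable]:
  "(\<lambda>\<omega>. record_value_count \<omega> N) \<in> measurable (bern_model q) (count_space UNIV)"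
proof (induction N)
  case 0
  then show ?case
    by (simp add: record_value_count_def)
next
  case (Suc N)
  have "(\<lambda>\<omega>. (\<lambda>k \<omega>. k + (if record_value \<omega> (Suc N) then 1 else 0)) (record_value_count \<omega> N) \<omega>)
      \<in> measurable (bern_model q) (count_space UNIV)"
    by (rule measurable_compose_countable[OF _ Suc.IH]) measurable
  then show ?case
    by (simp add: record_value_count_Suc)
qed

lemma pred_blocked [measurable]: "Measurable.pred (bern_model q) (blocked j L)"
proof -
  have "Measurable.pred (bern_model q)
      (\<lambda>\<omega>. (\<lambda>l \<omega>. \<forall>y\<in>free_prefix (set l) L. \<not> \<omega> (Suc j, y)) (choices \<omega> j) \<omega>)"
    by (rule measurable_compose_countable[OF _ measurable_choices]) measurable
  then show ?thesis
    unfolding blocked_def[abs_def] by simp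
qed

section \<open>The law of the record value count\<close>

lemma depends_only_on_record_value_count:
  "depends_only_on {\<omega>. P (record_value_count \<omega> N)} {(a, c). c \<le> N}"
proof (rule depends_only_onI)
  fix \<omega> \<omega>' :: sample
  assume "\<And>x. x \<in> {(a, c). c \<le> N} \<Longrightarrow> \<omega> x = \<omega>' x"
  then have "record_value_count \<omega> N = record_value_count \<omega>' N"
    by (intro record_value_count_local) auto
  moreover assume "\<omega> \<in> {\<omega>. P (record_value_count \<omega> N)}"
  ultimately show "\<omega>' \<in> {\<omega>. P (record_value_count \<omega> N)}"
    by simp
qed

lemma measure_first_exit_coin:
  assumes q: "0 \<le> q" "q \<le> 1"
    and A: "A \<in> sets (bern_model q)" "depends_only_on A {(a, c). c \<le> N}"
  shows "measure (bern_model q) (A \<inter> {\<omega>. first_exit (Suc N) i \<omega>} \<inter> {\<omega>. \<omega> (Suc i, Suc N) = b})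
    = measure (bern_model q) (A \<inter> {\<omega>. first_exit (Suc N) i \<omega>}) * (if b then 1 - q else q)"
proof -
  have dep: "depends_only_on (A \<inter> {\<omega>. first_exit (Suc N) i \<omega>}) {(a, c). c \<le> N}"
  proof (rule depends_only_onI)
    fix \<omega> \<omega>' assume agree: "\<And>x. x \<in> {(a, c). c \<le> N} \<Longrightarrow> \<omega> x = \<omega>' x"
      and "\<omega> \<in> A \<inter> {\<omega>. first_exit (Suc N) i \<omega>}"
    then show "\<omega>' \<in> A \<inter> {\<omega>. first_exit (Suc N) i \<omega>}"
      using A(2) first_exit_local[of "Suc N" \<omega> \<omega>' i] unfolding depends_only_on_def by auto
  qed
  have coin: "depends_only_on {\<omega>. \<omega> (Suc i, Suc N) = b} {(Suc i, Suc N)}"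
    by (simp add: depends_only_on_def)
  have "A \<inter> {\<omega>. first_exit (Suc N) i \<omega>} \<in> sets (bern_model q)" "{\<omega>. \<omega> (Suc i, Suc N) = b} \<in> sets (bern_model q)"
    using A(1) by (auto intro!: sets.Int pred_in_sets_bern_model)
  from bern_model_indep_disjoint_coords[OF this(1) dep this(2) coin]
  have "measure (bern_model q) (A \<inter> {\<omega>. first_exit (Suc N) i \<omega>} \<inter> {\<omega>. \<omega> (Suc i, Suc N) = b})
      = measure (bern_model q) (A \<inter> {\<omega>. first_exit (Suc N) i \<omega>})
        * measure (bern_model q) {\<omega>. \<omega> (Suc i, Suc N) = b}"
    by auto
  then show ?thesis
    using measure_bern_model_coord[OF q] by simp
qed

lemma measure_eq_sum_first_exit:
  assumes "0 < m" "A \<in> sets (bern_model q)"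
  shows "measure (bern_model q) A = (\<Sum>i<m. measure (bern_model q) (A \<inter> {\<omega>. first_exit m i \<omega>}))"
proof -
  interpret prob_space "bern_model q"
    by (rule prob_space_bern_model)
  have "A = (\<Union>i<m. A \<inter> {\<omega>. first_exit m i \<omega>})"
    using first_exit_exists[OF assms(1)] by blast
  also have "measure (bern_model q) \<dots> = (\<Sum>i<m. measure (bern_model q) (A \<inter> {\<omega>. first_exit m i \<omega>}))"
    using assms(2) first_exit_unique
    by (intro measure_finite_Union) (auto intro: pred_in_sets_bern_model simp: disjoint_family_on_def)
  finally show ?thesis .
qed

lemma pmf_binomial_pmf_Suc:
  assumes "0 \<le> p" "p \<le> 1"
  shows "pmf (binomial_pmf (Suc N) p) k =
    (1 - p) * pmf (binomial_pmf N p) k + p * (if k = 0 then 0 else pmf (binomial_pmf N p) (k - 1))"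
proof (cases k)
  case (Suc k')
  show ?thesis
  proof (cases "k' < N")
    case True
    then have "N - k' = Suc (N - Suc k')"
      by simp
    with assms show ?thesis
      unfolding Suc by (simp add: binomial_Suc_Suc algebra_simps)
  next
    case False
    then have "N choose Suc k' = 0" "N - k' = 0 \<or> N = k'"
      by auto
    with assms show ?thesis
      unfolding Suc by (auto simp: binomial_Suc_Suc algebra_simps)
  qed
qed (use assms in simp)

lemma sets_record_value_count: "{\<omega>. P (record_value_count \<omega> N)} \<in> sets (bern_model q)"
  by (rule pred_in_sets_bern_model) measurable

text \<open>Column \<open>N + 1\<close> becomes a record value with probability \<open>1 - q\<close>, independently of the columns
  before it: the record values form a Bernoulli process.\<close>

lemma measure_record_value_count_Suc_first_exit:
  assumes q: "0 \<le> q" "q \<le> 1"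
  shows "measure (bern_model q) ({\<omega>. record_value_count \<omega> (Suc N) = k} \<inter> {\<omega>. first_exit (Suc N) i \<omega>})
    = q * measure (bern_model q) ({\<omega>. record_value_count \<omega> N = k} \<inter> {\<omega>. first_exit (Suc N) i \<omega>})
      + (1 - q) * measure (bern_model q) ({\<omega>. record_value_count \<omega> N + 1 = k} \<inter> {\<omega>. first_exit (Suc N) i \<omega>})"
proof -
  interpret prob_space "bern_model q"
    by (rule prob_space_bern_model)
  let ?E = "{\<omega>. first_exit (Suc N) i \<omega>}"
  let ?S = "{\<omega>. record_value_count \<omega> N = k}"
  let ?S' = "{\<omega>. record_value_count \<omega> N + 1 = k}"
  have split: "{\<omega>. record_value_count \<omega> (Suc N) = k} \<inter> ?E
      = (?S \<inter> ?E \<inter> {\<omega>. \<omega> (Suc i, Suc N) = False}) \<union> (?S' \<inter> ?E \<inter> {\<omega>. \<omega> (Suc i, Suc N) = True})"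
    using record_value_iff_first_exit[of "Suc N" i] by (auto simp: record_value_count_Suc)
  have "?S \<inter> ?E \<inter> {\<omega>. \<omega> (Suc i, Suc N) = False} \<in> events"
    "?S' \<inter> ?E \<inter> {\<omega>. \<omega> (Suc i, Suc N) = True} \<in> events"
    using sets_record_value_count by (auto intro!: sets.Int pred_in_sets_bern_model)
  then have "prob ({\<omega>. record_value_count \<omega> (Suc N) = k} \<inter> ?E)
      = prob (?S \<inter> ?E \<inter> {\<omega>. \<omega> (Suc i, Suc N) = False}) + prob (?S' \<inter> ?E \<inter> {\<omega>. \<omega> (Suc i, Suc N) = True})"
    unfolding split by (rule finite_measure_Union) auto
  then show ?thesis
    using measure_first_exit_coin[OF q sets_record_value_count[of "\<lambda>s. s = k" N]
        depends_only_on_record_value_count[of "\<lambda>s. s = k" N], where i = i and b = False]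
      measure_first_exit_coin[OF q sets_record_value_count[of "\<lambda>s. s + 1 = k" N]
        depends_only_on_record_value_count[of "\<lambda>s. s + 1 = k" N], where i = i and b = True]
    by simp
qed

lemma measure_record_value_count_Suc:
  assumes q: "0 \<le> q" "q \<le> 1"
  shows "measure (bern_model q) {\<omega>. record_value_count \<omega> (Suc N) = k}
    = q * measure (bern_model q) {\<omega>. record_value_count \<omega> N = k}
      + (1 - q) * measure (bern_model q) {\<omega>. record_value_count \<omega> N + 1 = k}"
proof -
  have "measure (bern_model q) {\<omega>. record_value_count \<omega> (Suc N) = k} = (\<Sum>i<Suc N.
      measure (bern_model q) ({\<omega>. record_value_count \<omega> (Suc N) = k} \<inter> {\<omega>. first_exit (Suc N) i \<omega>}))"
    by (rule measure_eq_sum_first_exit[OF zero_less_Suc sets_record_value_count])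
  also have "\<dots> = q * (\<Sum>i<Suc N.
        measure (bern_model q) ({\<omega>. record_value_count \<omega> N = k} \<inter> {\<omega>. first_exit (Suc N) i \<omega>}))
      + (1 - q) * (\<Sum>i<Suc N.
        measure (bern_model q) ({\<omega>. record_value_count \<omega> N + 1 = k} \<inter> {\<omega>. first_exit (Suc N) i \<omega>}))"
    by (simp only: measure_record_value_count_Suc_first_exit[OF q] sum.distrib sum_distrib_left)
  also have "\<dots> = q * measure (bern_model q) {\<omega>. record_value_count \<omega> N = k}
      + (1 - q) * measure (bern_model q) {\<omega>. record_value_count \<omega> N + 1 = k}"
    by (simp only: measure_eq_sum_first_exit[OF zero_less_Suc sets_record_value_count[of "\<lambda>s. s = k" N], symmetric]
        measure_eq_sum_first_exit[OF zero_less_Suc sets_record_value_count[of "\<lambda>s. s + 1 = k" N], symmetric])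
  finally show ?thesis .
qed

theorem measure_record_value_count_eq:
  assumes q: "0 \<le> q" "q \<le> 1"
  shows "measure (bern_model q) {\<omega>. record_value_count \<omega> N = k} = pmf (binomial_pmf N (1 - q)) k"
proof (induction N arbitrary: k)
  case 0
  interpret prob_space "bern_model q"
    by (rule prob_space_bern_model)
  show ?case
    using q prob_space by (cases k) (simp_all add: record_value_count_def)
next
  case (Suc N)
  have "measure (bern_model q) {\<omega>. record_value_count \<omega> N + 1 = k}
      = (if k = 0 then 0 else pmf (binomial_pmf N (1 - q)) (k - 1))"
    using Suc.IH[of "k - 1"] by (cases k) simp_all
  then show ?case
    using measure_record_value_count_Suc[OF q, of N k] pmf_binomial_pmf_Suc[of "1 - q" N k] q Suc.IH[of k]
    by simp
qed

lemma measure_record_value_count_in: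
  assumes q: "0 \<le> q" "q \<le> 1"
  shows "measure (bern_model q) {\<omega>. record_value_count \<omega> N \<in> X}
    = measure_pmf.prob (binomial_pmf N (1 - q)) X"
proof -
  interpret prob_space "bern_model q"
    by (rule prob_space_bern_model)
  let ?D = "distr (bern_model q) (count_space UNIV) (\<lambda>\<omega>. record_value_count \<omega> N)"
  have "?D = measure_pmf (binomial_pmf N (1 - q))"
  proof (rule measure_eqI_countable[where A = UNIV])
    fix k :: nat
    have "emeasure ?D {k} = emeasure (bern_model q) {\<omega>. record_value_count \<omega> N = k}"
      by (subst emeasure_distr) (auto simp: vimage_def)
    also have "\<dots> = emeasure (measure_pmf (binomial_pmf N (1 - q))) {k}"
      using measure_record_value_count_eq[OF q, of N k]
      by (simp add: emeasure_eq_measure emeasure_pmf_single)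
    finally show "emeasure ?D {k} = emeasure (measure_pmf (binomial_pmf N (1 - q))) {k}" .
  qed auto
  moreover have "measure (bern_model q) {\<omega>. record_value_count \<omega> N \<in> X} = measure ?D X"
    by (subst measure_distr) (auto simp: vimage_def)
  ultimately show ?thesis
    by simp
qed

lemma measure_record_value_count_deviation_ge:
  assumes q: "0 \<le> q" "q \<le> 1" and N: "0 < N" and "0 \<le> \<epsilon>"
  shows "measure (bern_model q) {\<omega>. \<epsilon> \<le> \<bar>real (record_value_count \<omega> N) - real N * (1 - q)\<bar>}
    \<le> 2 * exp (- 2 * \<epsilon>\<^sup>2 / real N)"
proof -
  interpret binomial_distribution N "1 - q"
    by unfold_locales (use q in auto)
  show ?thesis
    using measure_record_value_count_in[OF q, of N "{x. \<epsilon> \<le> \<bar>real x - real N * (1 - q)\<bar>}"]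
      prob_abs_ge[OF N \<open>0 \<le> \<epsilon>\<close>] by simp
qed

lemma (in prob_space) AE_eventually_not_of_summable:
  assumes "\<And>n. {\<omega>\<in>space M. P n \<omega>} \<in> events" "summable (\<lambda>n. prob {\<omega>\<in>space M. P n \<omega>})"
  shows "AE \<omega> in M. eventually (\<lambda>n. \<not> P n \<omega>) sequentially"
  using borel_cantelli_AE1[OF assms(1) _ assms(2)]
  by (rule AE_mp) (auto simp: emeasure_eq_measure elim!: eventually_mono)

lemma summable_exp_neg_ln_squared:
  assumes "0 < c"
  shows "summable (\<lambda>N::nat. exp (- c * (ln (real N))\<^sup>2))"
proof (rule summable_comparison_test_bigo)
  show "summable (\<lambda>n::nat. norm (inverse (real n ^ 2)))"
    using inverse_power_summable[of 2, where 'a = real] by simp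
  show "(\<lambda>N::nat. exp (- c * (ln (real N))\<^sup>2)) \<in> O(\<lambda>n. inverse (real n ^ 2))"
    using assms by real_asymp
qed

lemma tendsto_zero_iff_eventually_abs_less_inverse:
  fixes f :: "'a \<Rightarrow> real"
  shows "(f \<longlongrightarrow> 0) F \<longleftrightarrow> (\<forall>k. eventually (\<lambda>x. \<bar>f x\<bar> < inverse (real (Suc k))) F)"
proof
  assume "(f \<longlongrightarrow> 0) F"
  then show "\<forall>k. eventually (\<lambda>x. \<bar>f x\<bar> < inverse (real (Suc k))) F"
    by (auto simp: tendsto_iff dist_real_def)
next
  assume small: "\<forall>k. eventually (\<lambda>x. \<bar>f x\<bar> < inverse (real (Suc k))) F"
  show "(f \<longlongrightarrow> 0) F"
    unfolding tendsto_iff dist_real_def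
  proof (intro allI impI)
    fix e :: real assume "0 < e"
    then obtain k where k: "inverse (real (Suc k)) < e"
      using reals_Archimedean by blast
    from small[rule_format, of k] show "eventually (\<lambda>x. \<bar>f x - 0\<bar> < e) F"
      by eventually_elim (use k in linarith)
  qed
qed

text \<open>Hoeffding's inequality at deviation \<open>\<epsilon> \<surd>N ln N\<close> gives the summable bound
  \<open>2 exp (-2 \<epsilon>\<^sup>2 (ln N)\<^sup>2)\<close>; Borel-Cantelli does the rest.\<close>

lemma measure_deviation_ratio_ge:
  assumes q: "0 \<le> q" "q \<le> 1" and "0 < \<epsilon>" "1 \<le> N"
  shows "measure (bern_model q) {\<omega>. \<epsilon> \<le> \<bar>(real (record_value_count \<omega> N) - real N * (1 - q))
      / (sqrt (real N) * ln (real N))\<bar>} \<le> 2 * exp (- (2 * \<epsilon>\<^sup>2) * (ln (real N))\<^sup>2)"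
proof -
  interpret prob_space "bern_model q"
    by (rule prob_space_bern_model)
  have "0 \<le> sqrt (real N) * ln (real N)"
    using assms by simp
  then have "{\<omega>. \<epsilon> \<le> \<bar>(real (record_value_count \<omega> N) - real N * (1 - q)) / (sqrt (real N) * ln (real N))\<bar>}
      \<subseteq> {\<omega>. \<epsilon> * sqrt (real N) * ln (real N) \<le> \<bar>real (record_value_count \<omega> N) - real N * (1 - q)\<bar>}"
    using \<open>0 < \<epsilon>\<close> by (auto simp: abs_div le_divide_eq split: if_splits)
  then have "prob {\<omega>. \<epsilon> \<le> \<bar>(real (record_value_count \<omega> N) - real N * (1 - q))
      / (sqrt (real N) * ln (real N))\<bar>} \<le> 2 * exp (- 2 * (\<epsilon> * sqrt (real N) * ln (real N))\<^sup>2 / real N)"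
    using assms
    by (intro order.trans[OF finite_measure_mono measure_record_value_count_deviation_ge[OF q]])
      (auto intro: pred_in_sets_bern_model)
  also have "\<dots> = 2 * exp (- (2 * \<epsilon>\<^sup>2) * (ln (real N))\<^sup>2)"
    using assms by (simp add: power_mult_distrib field_simps)
  finally show ?thesis .
qed

lemma AE_eventually_deviation_ratio_less:
  assumes q: "0 \<le> q" "q \<le> 1" and "0 < \<epsilon>"
  shows "AE \<omega> in bern_model q. eventually (\<lambda>N. \<bar>(real (record_value_count \<omega> N) - real N * (1 - q))
    / (sqrt (real N) * ln (real N))\<bar> < \<epsilon>) sequentially"
proof -
  interpret prob_space "bern_model q"
    by (rule prob_space_bern_model)
  have "summable (\<lambda>N. 2 * exp (- (2 * \<epsilon>\<^sup>2) * (ln (real N))\<^sup>2))"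
    using \<open>0 < \<epsilon>\<close> by (intro summable_mult summable_exp_neg_ln_squared) simp
  then have "summable (\<lambda>N. prob {\<omega>. \<epsilon> \<le> \<bar>(real (record_value_count \<omega> N) - real N * (1 - q))
      / (sqrt (real N) * ln (real N))\<bar>})"
    by (rule summable_comparison_test'[where N = 1]) (use measure_deviation_ratio_ge[OF q \<open>0 < \<epsilon>\<close>] in simp)
  then show ?thesis
    using AE_eventually_not_of_summable[where P = "\<lambda>N \<omega>. \<epsilon> \<le> \<bar>(real (record_value_count \<omega> N) - real N * (1 - q))
        / (sqrt (real N) * ln (real N))\<bar>"]
    by (simp add: not_le pred_in_sets_bern_model)
qed

theorem AE_record_value_count_deviation:
  assumes q: "0 \<le> q" "q \<le> 1"
  shows "AE \<omega> in bern_model q.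
    (\<lambda>N. (real (record_value_count \<omega> N) - real N * (1 - q)) / (sqrt (real N) * ln (real N))) \<longlonglongrightarrow> 0"
  unfolding tendsto_zero_iff_eventually_abs_less_inverse
  by (subst AE_all_countable) (intro allI AE_eventually_deviation_ratio_less[OF q]; simp)

section \<open>The overshoot of the choices\<close>

lemma (in prob_space) prob_le_of_conditional_le:
  fixes X :: "'a \<Rightarrow> 'b :: countable"
  assumes X: "X \<in> measurable M (count_space UNIV)"
    and events: "\<And>l. {\<omega>\<in>space M. X \<omega> = l \<and> P l \<omega>} \<in> events"
    and le: "\<And>l. prob {\<omega>\<in>space M. X \<omega> = l \<and> P l \<omega>} \<le> prob {\<omega>\<in>space M. X \<omega> = l} * c"
    and "0 \<le> c"
  shows "prob {\<omega>\<in>space M. P (X \<omega>) \<omega>} \<le> c"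
proof -
  have fibres: "{\<omega>\<in>space M. X \<omega> = l} \<in> events" for l
    using X by measurable
  have "emeasure M {\<omega>\<in>space M. P (X \<omega>) \<omega>} = emeasure M (\<Union>l. {\<omega>\<in>space M. X \<omega> = l \<and> P l \<omega>})"
    by (rule arg_cong[where f = "emeasure M"]) auto
  also have "\<dots> = (\<integral>\<^sup>+ l. emeasure M {\<omega>\<in>space M. X \<omega> = l \<and> P l \<omega>} \<partial>count_space UNIV)"
    using events by (intro emeasure_UN_countable) (auto simp: disjoint_family_on_def)
  also have "\<dots> \<le> (\<integral>\<^sup>+ l. emeasure M {\<omega>\<in>space M. X \<omega> = l} * ennreal c \<partial>count_space UNIV)"
    using le \<open>0 \<le> c\<close> by (intro nn_integral_mono) (simp add: emeasure_eq_measure ennreal_mult[symmetric])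
  also have "\<dots> = (\<integral>\<^sup>+ l. emeasure M {\<omega>\<in>space M. X \<omega> = l} \<partial>count_space UNIV) * ennreal c"
    by (simp add: nn_integral_multc)
  also have "(\<integral>\<^sup>+ l. emeasure M {\<omega>\<in>space M. X \<omega> = l} \<partial>count_space UNIV)
      = emeasure M (\<Union>l. {\<omega>\<in>space M. X \<omega> = l})"
    using fibres by (intro emeasure_UN_countable[symmetric]) (auto simp: disjoint_family_on_def)
  also have "(\<Union>l. {\<omega>\<in>space M. X \<omega> = l}) = space M"
    by auto
  finally show ?thesis
    using \<open>0 \<le> c\<close> by (simp add: emeasure_eq_measure prob_space)
qed

text \<open>Given the first \<open>j\<close> choices, the row \<open>j + 1\<close> is still fresh, and the \<open>L\<close> columns of the
  free prefix are all 0 with probability \<open>q\<^sup>L\<close> at most.\<close>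

lemma measure_blocked_le:
  assumes q: "0 \<le> q" "q \<le> 1"
  shows "measure (bern_model q) {\<omega>. blocked j L \<omega>} \<le> q ^ L"
proof -
  interpret prob_space "bern_model q"
    by (rule prob_space_bern_model)
  have "prob {\<omega>. choices \<omega> j = l \<and> (\<forall>y\<in>free_prefix (set l) L. \<not> \<omega> (Suc j, y))}
      \<le> prob {\<omega>. choices \<omega> j = l} * q ^ L" for l
  proof -
    define F where "F = (\<lambda>y. (Suc j, y)) ` free_prefix (set l) L"
    have F: "finite F" "L \<le> card F"
      unfolding F_def using card_free_prefix[of "set l" L] by (simp_all add: card_image inj_on_def)
    have "{\<omega>. \<forall>y\<in>free_prefix (set l) L. \<not> \<omega> (Suc j, y)} = {\<omega>. \<forall>x\<in>F. \<omega> x = False}"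
      unfolding F_def by auto
    moreover have "depends_only_on {\<omega>. choices \<omega> j = l} {(a, c). a \<le> j}"
      by (rule depends_only_onI) (use choices_local[of j] in fastforce)
    moreover have "depends_only_on {\<omega>. \<forall>x\<in>F. \<omega> x = False} {(a, c). a = Suc j}"
      unfolding F_def depends_only_on_def by auto
    moreover have "{\<omega>. choices \<omega> j = l} \<in> events" "{\<omega>. \<forall>x\<in>F. \<omega> x = False} \<in> events"
      using F(1) by (auto intro!: pred_in_sets_bern_model pred_intros_finite)
    moreover have "{(a, c). a \<le> j} \<inter> {(a, c). a = Suc j} = ({} :: (nat \<times> nat) set)"
      by auto
    ultimately have "prob {\<omega>. choices \<omega> j = l \<and> (\<forall>y\<in>free_prefix (set l) L. \<not> \<omega> (Suc j, y))}
        = prob {\<omega>. choices \<omega> j = l} * q ^ card F"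
      using bern_model_indep_disjoint_coords[of "{\<omega>. choices \<omega> j = l}" q "{(a, c). a \<le> j}"
          "{\<omega>. \<forall>x\<in>F. \<omega> x = False}" "{(a, c). a = Suc j}"]
        measure_bern_model_const_on[OF q F(1), of False]
      by (simp add: Collect_conj_eq)
    also have "\<dots> \<le> prob {\<omega>. choices \<omega> j = l} * q ^ L"
      using q F(2) by (intro mult_left_mono power_decreasing) auto
    finally show ?thesis .
  qed
  then show ?thesis
    using prob_le_of_conditional_le[of "\<lambda>\<omega>. choices \<omega> j" "\<lambda>l \<omega>. \<forall>y\<in>free_prefix (set l) L. \<not> \<omega> (Suc j, y)"]
      q by (simp add: blocked_def pred_in_sets_bern_model)
qed

text \<open>For \<open>q = 0\<close> the junk values \<open>ln 0 = 0\<close> and \<open>x / 0 = 0\<close> give \<open>gap_bound 0 j = 1\<close>, which is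
  still what is needed: \<open>0 ^ 1 = 0\<close>.\<close>

definition gap_bound :: "real \<Rightarrow> nat \<Rightarrow> nat" where
  "gap_bound q j = nat \<lceil>2 * ln (real j + 1) / - ln q\<rceil> + 1"

lemma neg_ln_nonneg: "0 \<le> (q :: real) \<Longrightarrow> q \<le> 1 \<Longrightarrow> 0 \<le> - ln q"
  by (cases "q = 0") simp_all

lemma gap_bound_mono:
  assumes "0 \<le> q" "q \<le> 1" "j \<le> j'"
  shows "gap_bound q j \<le> gap_bound q j'"
proof -
  have "2 * ln (real j + 1) / - ln q \<le> 2 * ln (real j' + 1) / - ln q"
    using assms neg_ln_nonneg[of q] by (intro divide_right_mono) auto
  then show ?thesis
    unfolding gap_bound_def by (intro add_right_mono nat_mono ceiling_mono)
qed

lemma gap_bound_le: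
  assumes "0 \<le> q" "q \<le> 1"
  shows "real (gap_bound q j) \<le> 2 * ln (real j + 1) / - ln q + 2"
proof -
  let ?x = "2 * ln (real j + 1) / - ln q"
  have "0 \<le> ?x"
    using neg_ln_nonneg[OF assms] by (intro divide_nonneg_nonneg) simp_all
  then have "real (nat \<lceil>?x\<rceil>) = real_of_int \<lceil>?x\<rceil>"
    by simp
  then show ?thesis
    unfolding gap_bound_def by linarith
qed

lemma power_gap_bound_le:
  assumes "0 \<le> q" "q < 1"
  shows "q ^ gap_bound q j \<le> inverse ((real j + 1)\<^sup>2)"
proof (cases "q = 0")
  case False
  with assms have "0 < q" "0 < - ln q"
    by simp_all
  have "2 * ln (real j + 1) / - ln q \<le> real (gap_bound q j)"
    unfolding gap_bound_def by linarith
  then have "2 * ln (real j + 1) \<le> - ln q * real (gap_bound q j)"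
    using \<open>0 < - ln q\<close> by (subst (asm) divide_le_eq) (simp_all add: mult.commute)
  have "q ^ gap_bound q j = exp (real (gap_bound q j) * ln q)"
    using \<open>0 < q\<close> by (simp add: exp_of_nat_mult)
  also have "\<dots> \<le> exp (- (2 * ln (real j + 1)))"
    using \<open>2 * ln (real j + 1) \<le> - ln q * real (gap_bound q j)\<close> by (simp add: mult.commute)
  also have "\<dots> = inverse ((real j + 1)\<^sup>2)"
    by (simp add: exp_minus exp_of_nat_mult[of 2, simplified])
  finally show ?thesis .
qed (simp add: gap_bound_def)

theorem AE_eventually_not_blocked:
  assumes q: "0 \<le> q" "q < 1"
  shows "AE \<omega> in bern_model q. eventually (\<lambda>j. \<not> blocked j (gap_bound q j) \<omega>) sequentially"
proof -
  interpret prob_space "bern_model q"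
    by (rule prob_space_bern_model)
  have summable: "summable (\<lambda>j. inverse ((real j + 1)\<^sup>2))"
    using summable_ignore_initial_segment[OF inverse_power_summable[of 2, where 'a = real], of 1]
    by (simp add: add.commute)
  have bound: "prob {\<omega> \<in> space (bern_model q). blocked j (gap_bound q j) \<omega>} \<le> inverse ((real j + 1)\<^sup>2)"
    for j
    using measure_blocked_le[of q j "gap_bound q j"] power_gap_bound_le[OF q, of j] q by simp
  have "summable (\<lambda>j. prob {\<omega> \<in> space (bern_model q). blocked j (gap_bound q j) \<omega>})"
    by (rule summable_comparison_test'[OF summable, where N = 0]) (use bound in simp)
  then show ?thesis
    by (intro AE_eventually_not_of_summable) (auto intro: pred_in_sets_bern_model)
qed

theorem AE_rows_unbounded:
  assumes q: "0 \<le> q" "q < 1"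
  shows "AE \<omega> in bern_model q. rows_unbounded \<omega>"
proof -
  interpret prob_space "bern_model q"
    by (rule prob_space_bern_model)
  have "AE \<omega> in bern_model q. \<exists>j\<ge>N. \<omega> (k, j)" for k N
  proof -
    let ?S = "{\<omega>. \<forall>j\<ge>N. \<not> \<omega> (k, j)}"
    have "prob ?S \<le> q ^ L" for L
    proof -
      let ?F = "(\<lambda>j. (k, j)) ` {N..<N + L}"
      have "prob ?S \<le> prob {\<omega>. \<forall>x\<in>?F. \<omega> x = False}"
        by (intro finite_measure_mono pred_in_sets_bern_model) (auto intro!: pred_intros_finite)
      also have "\<dots> = q ^ L"
        using measure_bern_model_const_on[of q ?F False] q by (simp add: card_image inj_on_def)
      finally show ?thesis .
    qed
    moreover have "(\<lambda>L. q ^ L) \<longlonglongrightarrow> 0"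
      using q by (intro LIMSEQ_power_zero) simp
    ultimately have "prob ?S \<le> 0"
      by (intro LIMSEQ_le_const) auto
    then have "emeasure (bern_model q) ?S = 0"
      by (simp add: emeasure_eq_measure measure_nonneg antisym)
    then show ?thesis
      by (subst AE_iff_measurable[OF pred_in_sets_bern_model]) auto
  qed
  then show ?thesis
    unfolding rows_unbounded_def by (simp add: AE_all_countable)
qed

section \<open>Asymptotics of the records\<close>

lemma max_choice_excess_bigo:
  assumes q: "0 \<le> q" "q \<le> 1" and unb: "rows_unbounded \<omega>"
    and not_blocked: "eventually (\<lambda>j. \<not> blocked j (gap_bound q j) \<omega>) sequentially"
  shows "(\<lambda>n. real (max_choice \<omega> n) - real n) \<in> O(\<lambda>n. ln (real n))"
proof -
  obtain j0 where j0: "\<And>j. j0 \<le> j \<Longrightarrow> \<not> blocked j (gap_bound q j) \<omega>"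
    using not_blocked unfolding eventually_sequentially by blast
  define C where "C = (\<Sum>j<j0. choice \<omega> j - Suc j)"
  have choice_excess: "choice \<omega> j - Suc j \<le> C + gap_bound q j" for j
  proof (cases "j < j0")
    case True
    then have "choice \<omega> j - Suc j \<le> C"
      unfolding C_def by (intro member_le_sum[of j "{..<j0}" "\<lambda>j. choice \<omega> j - Suc j"]) auto
    then show ?thesis
      by simp
  next
    case False
    then show ?thesis
      using j0[of j] blocked_of_excess[of "gap_bound q j" \<omega> j] by linarith
  qed
  define c where "c = 2 / - ln q"
  have "\<bar>real (max_choice \<omega> n) - real n\<bar> \<le> real C + c * ln (real n + 1) + 2" if n: "0 < n" for n
  proof -
    obtain j where j: "j < n" "max_choice \<omega> n - n \<le> choice \<omega> j - Suc j"
      using max_choice_excess[OF n] by blast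
    have "max_choice \<omega> n - n \<le> C + gap_bound q n"
      using j choice_excess[of j] gap_bound_mono[OF q, of j n] by linarith
    then show ?thesis
      using max_choice_ge[OF unb, of n] gap_bound_le[OF q, of n] by (simp add: c_def of_nat_diff)
  qed
  then have "(\<lambda>n. real (max_choice \<omega> n) - real n) \<in> O(\<lambda>n. real C + c * ln (real n + 1) + 2)"
    by (intro bigoI[where c = 1] eventually_mono[OF eventually_gt_at_top[of 0]])
      (auto intro: order.trans[OF _ abs_ge_self])
  also have "(\<lambda>n. real C + c * ln (real n + 1) + 2) \<in> O(\<lambda>n. ln (real n))"
    by real_asymp
  finally show ?thesis .
qed

lemma sqrt_mult_ln_le:
  fixes x y :: real
  assumes "2 \<le> x" "x \<le> y" "y \<le> 2 * x"
  shows "sqrt y * ln y \<le> 4 * (sqrt x * ln x)"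
proof -
  have "sqrt y \<le> sqrt 2 * sqrt x"
    using assms by (simp add: real_sqrt_mult[symmetric])
  also have "\<dots> \<le> 2 * sqrt x"
    using real_sqrt_le_mono[of 2 4] assms(1) by (intro mult_right_mono) auto
  finally have "sqrt y \<le> 2 * sqrt x" .
  moreover have "ln y \<le> 2 * ln x"
  proof -
    have "ln y \<le> ln (2 * x)"
      using assms by simp
    also have "\<dots> = ln 2 + ln x"
      using assms by (simp add: ln_mult)
    also have "ln 2 \<le> ln x"
      using assms by simp
    finally show ?thesis
      by simp
  qed
  moreover have "0 \<le> ln y"
    using assms by simp
  ultimately have "sqrt y * ln y \<le> (2 * sqrt x) * (2 * ln x)"
    using assms(1) by (intro mult_mono) auto
  then show ?thesis
    by simp
qed

lemma eventually_sqrt_mult_ln_ratio_le: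
  fixes M :: "nat \<Rightarrow> nat"
  assumes M_ge: "\<And>n. n \<le> M n" and excess: "(\<lambda>n. real (M n) - real n) \<in> o(real)"
  shows "eventually (\<lambda>n. \<bar>sqrt (real (M n)) * ln (real (M n)) / (sqrt (real n) * ln (real n))\<bar> \<le> 4)
    sequentially"
  using landau_o.smallD[OF excess zero_less_one] eventually_ge_at_top[of 2]
proof eventually_elim
  case (elim n)
  then have "sqrt (real (M n)) * ln (real (M n)) \<le> 4 * (sqrt (real n) * ln (real n))"
    using sqrt_mult_ln_le[of "real n" "real (M n)"] M_ge[of n] by simp
  moreover have "0 < sqrt (real n) * ln (real n)" "0 \<le> sqrt (real (M n)) * ln (real (M n))"
    using elim M_ge[of n] by simp_all
  ultimately show ?case
    by (simp add: divide_le_eq)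
qed

text \<open>Moving the argument of a sequence with deviation \<open>o(\<surd>N ln N)\<close> from \<open>N\<close> to \<open>M n \<ge> n\<close>
  costs only \<open>p (M n - n) = O(ln n)\<close>, which is negligible at that scale.\<close>

lemma deviation_ratio_reindex:
  fixes S :: "nat \<Rightarrow> real" and M :: "nat \<Rightarrow> nat"
  assumes S: "(\<lambda>N. (S N - real N * p) / (sqrt (real N) * ln (real N))) \<longlonglongrightarrow> 0"
    and M_ge: "\<And>n. n \<le> M n"
    and M_excess: "(\<lambda>n. real (M n) - real n) \<in> O(\<lambda>n. ln (real n))"
  shows "(\<lambda>n. (S (M n) - real n * p) / (sqrt (real n) * ln (real n))) \<longlonglongrightarrow> 0"
proof -
  define \<phi> where "\<phi> N = sqrt (real N) * ln (real N)" for N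
  define A where "A N = (S N - real N * p) / \<phi> N" for N
  have "(\<lambda>n::nat. ln (real n)) \<in> o(\<phi>)" "(\<lambda>n::nat. ln (real n)) \<in> o(real)"
    unfolding \<phi>_def by real_asymp+
  with M_excess have excess_\<phi>: "(\<lambda>n. real (M n) - real n) \<in> o(\<phi>)"
    and excess_n: "(\<lambda>n. real (M n) - real n) \<in> o(real)"
    by (auto intro: landau_o.big_small_trans)
  have "filterlim M at_top sequentially"
    by (rule filterlim_at_top_mono[OF filterlim_ident]) (simp add: M_ge)
  with S have "(\<lambda>n. A (M n)) \<longlonglongrightarrow> 0"
    unfolding A_def \<phi>_def by (rule filterlim_compose)
  moreover have "eventually (\<lambda>n. norm (A (M n) * (\<phi> (M n) / \<phi> n)) \<le> norm (A (M n)) * 4) sequentially"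
    using eventually_sqrt_mult_ln_ratio_le[OF M_ge excess_n]
    by eventually_elim (unfold real_norm_def abs_mult[of "A _"] \<phi>_def, rule mult_left_mono, simp_all)
  ultimately have "(\<lambda>n. A (M n) * (\<phi> (M n) / \<phi> n)) \<longlonglongrightarrow> 0"
    by (rule tendsto_0_le)
  moreover have "(\<lambda>n. p * ((real (M n) - real n) / \<phi> n)) \<longlonglongrightarrow> 0"
    using tendsto_mult_right_zero[OF smalloD_tendsto[OF excess_\<phi>]] .
  ultimately have "(\<lambda>n. A (M n) * (\<phi> (M n) / \<phi> n) + p * ((real (M n) - real n) / \<phi> n)) \<longlonglongrightarrow> 0"
    by (rule tendsto_add_zero)
  moreover have "eventually (\<lambda>n. A (M n) * (\<phi> (M n) / \<phi> n) + p * ((real (M n) - real n) / \<phi> n)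
      = (S (M n) - real n * p) / \<phi> n) sequentially"
    using eventually_ge_at_top[of 2]
  proof eventually_elim
    case (elim n)
    then have "0 < \<phi> n" "0 < \<phi> (M n)"
      using M_ge[of n] by (simp_all add: \<phi>_def)
    then show ?case
      unfolding A_def by (simp add: field_simps)
  qed
  ultimately show ?thesis
    unfolding \<phi>_def by (rule Lim_transform_eventually)
qed

lemma tendsto_ratio_of_deviation_ratio:
  fixes R :: "nat \<Rightarrow> real"
  assumes "(\<lambda>n. (R n - real n * p) / (sqrt (real n) * ln (real n))) \<longlonglongrightarrow> 0"
  shows "(\<lambda>n. R n / real n) \<longlonglongrightarrow> p"
proof -
  have "(\<lambda>n::nat. sqrt (real n) * ln (real n) / real n) \<longlonglongrightarrow> 0"
    by real_asymp
  with assms have "(\<lambda>n. (R n - real n * p) / (sqrt (real n) * ln (real n))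
      * (sqrt (real n) * ln (real n) / real n) + p) \<longlonglongrightarrow> 0 * 0 + p"
    by (intro tendsto_intros)
  moreover have "eventually (\<lambda>n. (R n - real n * p) / (sqrt (real n) * ln (real n))
      * (sqrt (real n) * ln (real n) / real n) + p = R n / real n) sequentially"
    using eventually_ge_at_top[of "2 :: nat"]
    by eventually_elim (simp add: field_simps)
  ultimately show ?thesis
    by (simp add: Lim_transform_eventually)
qed

lemma records_deviation_ratio_tendsto_zero:
  assumes q: "0 \<le> q" "q \<le> 1" and unb: "rows_unbounded \<omega>"
    and deviation: "(\<lambda>N. (real (record_value_count \<omega> N) - real N * (1 - q))
        / (sqrt (real N) * ln (real N))) \<longlonglongrightarrow> 0"
    and not_blocked: "eventually (\<lambda>j. \<not> blocked j (gap_bound q j) \<omega>) sequentially"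
  shows "(\<lambda>n. (real (records \<omega> n) - real n * (1 - q)) / (sqrt (real n) * ln (real n))) \<longlonglongrightarrow> 0"
proof -
  have reindexed: "(\<lambda>n. (real (record_value_count \<omega> (max_choice \<omega> n)) - real n * (1 - q))
      / (sqrt (real n) * ln (real n))) \<longlonglongrightarrow> 0"
    using deviation max_choice_ge[OF unb] max_choice_excess_bigo[OF q unb not_blocked]
    by (rule deviation_ratio_reindex)
  have same: "eventually (\<lambda>n. record_value_count \<omega> (max_choice \<omega> n) = records \<omega> n) sequentially"
    using eventually_gt_at_top[of 0] by eventually_elim
      (simp add: records_eq_seq_records[OF unb] seq_records_eq_record_value_count[OF unb])
  from reindexed show ?thesis
    by (rule Lim_transform_eventually) (use same in \<open>auto elim: eventually_mono\<close>)
qed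

theorem lemma2p1:
  fixes q :: real
  assumes "0 \<le> q" and "q < 1"
  shows "(AE \<omega> in bern_model q.
           (\<lambda>n. (real (records \<omega> n) - real n * (1 - q)) / (sqrt (real n) * ln (real n)))
             \<longlonglongrightarrow> 0) \<and>
         (AE \<omega> in bern_model q. (\<lambda>n. real (records \<omega> n) / real n) \<longlonglongrightarrow> 1 - q)"
proof -
  have q: "0 \<le> q" "q \<le> 1"
    using assms by simp_all
  have deviation: "AE \<omega> in bern_model q.
      (\<lambda>n. (real (records \<omega> n) - real n * (1 - q)) / (sqrt (real n) * ln (real n))) \<longlonglongrightarrow> 0"
    using AE_rows_unbounded[OF assms] AE_record_value_count_deviation[OF q]
      AE_eventually_not_blocked[OF assms]
    by eventually_elim (rule records_deviation_ratio_tendsto_zero[OF q])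
  moreover from deviation have "AE \<omega> in bern_model q. (\<lambda>n. real (records \<omega> n) / real n) \<longlonglongrightarrow> 1 - q"
    by eventually_elim (rule tendsto_ratio_of_deviation_ratio)
  ultimately show ?thesis ..
qed

end
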